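(* Let $P$ be a program and $\sigma\in C_{\mathrm{Power}}(P)$ a Power computation. Then a load $(t,i)$ reads its value from a store $(t',i')$ via a load-from-memory transition if and only if (1) $\sigma=\sigma_1\cdot(\mathrm{prop},t,t',i',a)\cdot\sigma_2\cdot(\mathrm{load},t,i,a)\cdot\sigma_3$, (2) $\sigma_2$ contains no event of the form $(\mathrm{prop},t,*,*,a)$, and (3) $\sigma_3$ contains no event of the form $(\mathrm{commit},t,j,*,a)$ with $j\in\{1,\dots,i-1\}$.
   Context: Programs. Fix a finite set $D$ of values, which also serve as addresses, with $0\in D$, and a finite set $\mathit{Reg}$ of registers taking values in $D$. Expressions are built from constants in $D$, registers, and functions over $D\cup\{\bot\}$ that return $\bot$ iff some argument is $\bot$. Commands are loads $r\leftarrow \mathrm{mem}[e]$, stores $\mathrm{mem}[e]\leftarrow e'$, assignments $r\leftarrow e$, and $\mathrm{assume}(e)$. A thread is a finite automaton whose transitions (instructions) are labeled by commands; a program is a finite sequence of threads with ids $1,\dots,|P|$. $(t,i)$ denotes the $i$-th fetched instruction of thread $t$; $*$ denotes an arbitrary component. Power semantics. A state consists of, for each thread $t$, a runtime state $(F,C,L)$ ($F$ the sequence of fetched instructions, $C$ the set of committed indices, $L$ mapping each index to $\bot$ or to the store read by the load there: an initial store $\mathrm{init}_a$ of value $0$ to $a$, or a pair $(t',i')$), and a storage state $(co,prop)$ ($co$ assigns rational coherence keys to committed stores, initial stores have key $0$; $prop(t,a)$ is the last store to $a$ propagated to $t$, initially $\mathrm{init}_a$). Register values for instruction $(t,i)$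 come from the latest earlier fetched assignment or load to the register ($0$ if none; a load gives $\bot$ if unsatisfied, $0$ if it read an initial store, else the value of the store read). Address/data dependencies are earlier instructions an address/value depends on via registers; control dependencies are earlier assumes. Transitions: (fetch) append an instruction of $T_t$ continuing from the last fetched one's target state, event $(\mathrm{fetch},t,\text{instr})$; (load from memory) load $i$ with $L[i]=\bot$ and address $a\ne\bot$: $L[i]:=prop(t,a)$, event $(\mathrm{load},t,i,a)$; (early read) same event, if the greatest $i'<i$ that is a store with address in $\{a,\bot\}$ has address $a$, value $\ne\bot$ and is uncommitted: $L[i]:=(t,i')$; (commit) uncommitted $i$ with committed address/data/control dependencies, address and value $\ne\bot$, all earlier instructions with the same or unknown address committed, $L[i]\ne\bot$ for loads, value $\ne0$ for assumes: event $(\mathrm{commit},t,i)$; for a store additionally a fresh key $k$ is set as $co(t,i)$, event $(\mathrm{commit},t,i,k,a)$, immediately followed by propagation to $t$; (propagate) committed store $(t',i')$ to $a$ with $co(prop(t,a))<co(t',i')$: $prop(t,a):=(t',i')$, event $(\mathrm{prop},t,t',i',a)$. Final states: all fetched instructions committed; for loads $i'<i$ of a thread to the same address, $co(L[i'])\le co(L[i])$; for a store $i'$ and later load $i$ of a thread to the same address, $co(t,i')\le co(L[i])$. $C_{\mathrm{Power}}(P)$ is the set of event sequences leading from the initial state (nothing fetched) to a final state. *)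

theory Defs
  imports Main "HOL-Library.Extended_Nat"
begin

text \<open>A function symbol carries a function on D; it is lifted to D + bottom strictly
  (result is bottom iff some argument is bottom), which is exactly the class of
  functions allowed in the paper.  Bottom is None.\<close>

datatype ('r, 'd) exp =
    Const 'd
  | Reg 'r
  | Fn "'d list \<Rightarrow> 'd" "('r, 'd) exp list"

fun eval :: "('r \<Rightarrow> 'd option) \<Rightarrow> ('r, 'd) exp \<Rightarrow> 'd option" where
  "eval \<rho> (Const d) = Some d"
| "eval \<rho> (Reg r) = \<rho> r"
| "eval \<rho> (Fn f es) =
     (if (\<forall>e\<in>set es. eval \<rho> e \<noteq> None)
      then Some (f (map (\<lambda>e. the (eval \<rho> e)) es)) else None)"

fun regs_of :: "('r, 'd) exp \<Rightarrow> 'r set" where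
  "regs_of (Const d) = {}"
| "regs_of (Reg r) = {r}"
| "regs_of (Fn f es) = \<Union> (set (map regs_of es))"

datatype ('r, 'd) cmd =
    Load 'r "('r, 'd) exp"
  | Store "('r, 'd) exp" "('r, 'd) exp" \<comment> \<open>mem[e] <- e'\<close>
  | Assign 'r "('r, 'd) exp"
  | Assume "('r, 'd) exp"

text \<open>An instruction is a transition (source state, command, target state) of a thread automaton.\<close>
type_synonym ('q, 'r, 'd) instr = "'q \<times> ('r, 'd) cmd \<times> 'q"

record ('q, 'r, 'd) thread =
  tinit :: 'q
  ttrans :: "('q, 'r, 'd) instr set"

type_synonym ('q, 'r, 'd) program = "('q, 'r, 'd) thread list"

definition wf_prog :: "('q, 'r, 'd) program \<Rightarrow> bool" where
  "wf_prog P \<longleftrightarrow> (\<forall>T\<in>set P. finite (ttrans T))"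

definition cmd_of :: "('q, 'r, 'd) instr \<Rightarrow> ('r, 'd) cmd" where
  "cmd_of ins = fst (snd ins)"

definition src_of :: "('q, 'r, 'd) instr \<Rightarrow> 'q" where
  "src_of ins = fst ins"

definition tgt_of :: "('q, 'r, 'd) instr \<Rightarrow> 'q" where
  "tgt_of ins = snd (snd ins)"

definition is_load :: "('r, 'd) cmd \<Rightarrow> bool" where
  "is_load c = (case c of Load _ _ \<Rightarrow> True | _ \<Rightarrow> False)"

definition is_store :: "('r, 'd) cmd \<Rightarrow> bool" where
  "is_store c = (case c of Store _ _ \<Rightarrow> True | _ \<Rightarrow> False)"

definition is_assume :: "('r, 'd) cmd \<Rightarrow> bool" where
  "is_assume c = (case c of Assume _ \<Rightarrow> True | _ \<Rightarrow> False)"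

definition is_mem :: "('r, 'd) cmd \<Rightarrow> bool" where
  "is_mem c \<longleftrightarrow> is_load c \<or> is_store c"

definition writes :: "('r, 'd) cmd \<Rightarrow> 'r \<Rightarrow> bool" where
  "writes c r = (case c of Load r' _ \<Rightarrow> r' = r | Assign r' _ \<Rightarrow> r' = r | _ \<Rightarrow> False)"

text \<open>Store identifiers: the initial store init_a, or a store (t,i) (thread t, i-th fetched
  instruction, indices 1-based).\<close>
datatype 'd sid = Init 'd | St nat nat

record ('q, 'r, 'd) pstate =
  Fs  :: "nat \<Rightarrow> ('q, 'r, 'd) instr list"
  Cs  :: "nat \<Rightarrow> nat set"
  Ls  :: "nat \<Rightarrow> nat \<Rightarrow> 'd sid option"     \<comment> \<open>L of thread t; None = bottom\<close>
  co  :: "nat \<times> nat \<Rightarrow> rat option"          \<comment> \<open>coherence keys of committed stores\<close>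
  prp :: "nat \<Rightarrow> 'd \<Rightarrow> 'd sid"

definition init_state :: "('q, 'r, 'd) pstate" where
  "init_state = \<lparr> Fs = (\<lambda>t. []), Cs = (\<lambda>t. {}), Ls = (\<lambda>t i. None),
                  co = (\<lambda>x. None), prp = (\<lambda>t a. Init a) \<rparr>"

definition fetched :: "('q, 'r, 'd) pstate \<Rightarrow> nat \<Rightarrow> nat \<Rightarrow> bool" where
  "fetched s t i \<longleftrightarrow> 1 \<le> i \<and> i \<le> length (Fs s t)"

definition cmd_at :: "('q, 'r, 'd) pstate \<Rightarrow> nat \<Rightarrow> nat \<Rightarrow> ('r, 'd) cmd" where
  "cmd_at s t i = cmd_of (Fs s t ! (i - 1))"

text \<open>Register file in front of instruction i (1-based) of a fetched sequence F, given the
  values returned by the loads (lv j for the load at index j): each register holds the value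
  of the latest earlier assignment or load to it, and 0 if there is none.\<close>
definition reg_step :: "(nat \<Rightarrow> 'd option) \<Rightarrow> ('r \<Rightarrow> 'd option)
     \<Rightarrow> nat \<times> ('q, 'r, 'd) instr \<Rightarrow> ('r \<Rightarrow> 'd option)" where
  "reg_step lv \<rho> ji = (case cmd_of (snd ji) of
       Assign r e \<Rightarrow> \<rho>(r := eval \<rho> e)
     | Load r e \<Rightarrow> \<rho>(r := lv (fst ji))
     | _ \<Rightarrow> \<rho>)"

definition regs_at :: "('q, 'r, 'd::zero) instr list \<Rightarrow> (nat \<Rightarrow> 'd option) \<Rightarrow> nat \<Rightarrow> ('r \<Rightarrow> 'd option)" where
  "regs_at F lv i = foldl (reg_step lv) (\<lambda>r. Some 0) (zip [1..<i] F)"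

definition store_val_with :: "('q, 'r, 'd::zero) pstate \<Rightarrow> (nat \<Rightarrow> nat \<Rightarrow> 'd option)
     \<Rightarrow> nat \<Rightarrow> nat \<Rightarrow> 'd option" where
  "store_val_with s lv t i =
     (if fetched s t i then
        (case cmd_at s t i of Store ea ev \<Rightarrow> eval (regs_at (Fs s t) (lv t) i) ev | _ \<Rightarrow> None)
      else None)"

text \<open>Since store values may depend on load values (also in other threads),
  this is computed as a least fixed point by iteration from bottom.\<close>
primrec lvals :: "('q, 'r, 'd::zero) pstate \<Rightarrow> nat \<Rightarrow> nat \<Rightarrow> nat \<Rightarrow> 'd option" where
  "lvals s 0 = (\<lambda>t j. None)"
| "lvals s (Suc n) = (\<lambda>t j. case Ls s t j of
       None \<Rightarrow> None
     | Some (Init a) \<Rightarrow> Some 0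
     | Some (St t' i') \<Rightarrow> store_val_with s (lvals s n) t' i')"

definition load_val :: "('q, 'r, 'd::zero) pstate \<Rightarrow> nat \<Rightarrow> nat \<Rightarrow> 'd option" where
  "load_val s t j =
     (if \<exists>n. lvals s n t j \<noteq> None then lvals s (LEAST n. lvals s n t j \<noteq> None) t j else None)"

definition regval :: "('q, 'r, 'd::zero) pstate \<Rightarrow> nat \<Rightarrow> nat \<Rightarrow> 'r \<Rightarrow> 'd option" where
  "regval s t i = regs_at (Fs s t) (load_val s t) i"

definition addr :: "('q, 'r, 'd::zero) pstate \<Rightarrow> nat \<Rightarrow> nat \<Rightarrow> 'd option" where
  "addr s t i = (case cmd_at s t i of
       Load r e \<Rightarrow> eval (regval s t i) e
     | Store e e' \<Rightarrow> eval (regval s t i) e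
     | _ \<Rightarrow> None)"

definition ival :: "('q, 'r, 'd::zero) pstate \<Rightarrow> nat \<Rightarrow> nat \<Rightarrow> 'd option" where
  "ival s t i = (case cmd_at s t i of
       Load r e \<Rightarrow> load_val s t i
     | Store e e' \<Rightarrow> eval (regval s t i) e'
     | Assign r e \<Rightarrow> eval (regval s t i) e
     | Assume e \<Rightarrow> eval (regval s t i) e)"

definition writer :: "('q, 'r, 'd) instr list \<Rightarrow> nat \<Rightarrow> 'r \<Rightarrow> nat option" where
  "writer F i r =
     (if \<exists>j. 1 \<le> j \<and> j < i \<and> j \<le> length F \<and> writes (cmd_of (F ! (j - 1))) r
      then Some (GREATEST j. 1 \<le> j \<and> j < i \<and> j \<le> length F \<and> writes (cmd_of (F ! (j - 1))) r)
      else None)"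

inductive depends :: "('q, 'r, 'd) instr list \<Rightarrow> nat \<Rightarrow> ('r, 'd) exp \<Rightarrow> nat \<Rightarrow> bool"
  for F where
  dep_direct: "r \<in> regs_of e \<Longrightarrow> writer F i r = Some j \<Longrightarrow> depends F i e j"
| dep_trans: "r \<in> regs_of e \<Longrightarrow> writer F i r = Some j \<Longrightarrow> cmd_of (F ! (j - 1)) = Assign r' e'
     \<Longrightarrow> depends F j e' k \<Longrightarrow> depends F i e k"

definition addr_deps :: "('q, 'r, 'd) pstate \<Rightarrow> nat \<Rightarrow> nat \<Rightarrow> nat set" where
  "addr_deps s t i = (case cmd_at s t i of
       Load r e \<Rightarrow> {j. depends (Fs s t) i e j}
     | Store e e' \<Rightarrow> {j. depends (Fs s t) i e j}
     | _ \<Rightarrow> {})"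

definition data_deps :: "('q, 'r, 'd) pstate \<Rightarrow> nat \<Rightarrow> nat \<Rightarrow> nat set" where
  "data_deps s t i = (case cmd_at s t i of
       Load r e \<Rightarrow> {}
     | Store e e' \<Rightarrow> {j. depends (Fs s t) i e' j}
     | Assign r e \<Rightarrow> {j. depends (Fs s t) i e j}
     | Assume e \<Rightarrow> {j. depends (Fs s t) i e j})"

definition ctrl_deps :: "('q, 'r, 'd) pstate \<Rightarrow> nat \<Rightarrow> nat \<Rightarrow> nat set" where
  "ctrl_deps s t i = {j. 1 \<le> j \<and> j < i \<and> is_assume (cmd_at s t j)}"

datatype ('q, 'r, 'd) event =
    EFetch nat "('q, 'r, 'd) instr"
  | ELoad nat nat 'd
  | ECommit nat nat
  | ECommitSt nat nat rat 'd
  | EProp nat nat nat 'd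

definition key :: "('q, 'r, 'd) pstate \<Rightarrow> 'd sid \<Rightarrow> rat" where
  "key s x = (case x of Init a \<Rightarrow> 0 | St t i \<Rightarrow> the (co s (t, i)))"

definition thread_id :: "('q, 'r, 'd) program \<Rightarrow> nat \<Rightarrow> bool" where
  "thread_id P t \<longleftrightarrow> 1 \<le> t \<and> t \<le> length P"

definition setL :: "('q, 'r, 'd) pstate \<Rightarrow> nat \<Rightarrow> nat \<Rightarrow> 'd sid \<Rightarrow> ('q, 'r, 'd) pstate" where
  "setL s t i x = s\<lparr> Ls := (Ls s)(t := (Ls s t)(i := Some x)) \<rparr>"

definition lfm_step :: "('q, 'r, 'd::zero) program \<Rightarrow> ('q, 'r, 'd) pstate \<Rightarrow> nat \<Rightarrow> nat \<Rightarrow> 'd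
     \<Rightarrow> ('q, 'r, 'd) pstate \<Rightarrow> bool" where
  "lfm_step P s t i a s' \<longleftrightarrow>
     thread_id P t \<and> fetched s t i \<and> is_load (cmd_at s t i) \<and> Ls s t i = None
     \<and> addr s t i = Some a \<and> s' = setL s t i (prp s t a)"

definition early_step :: "('q, 'r, 'd::zero) program \<Rightarrow> ('q, 'r, 'd) pstate \<Rightarrow> nat \<Rightarrow> nat \<Rightarrow> 'd
     \<Rightarrow> ('q, 'r, 'd) pstate \<Rightarrow> bool" where
  "early_step P s t i a s' \<longleftrightarrow>
     thread_id P t \<and> fetched s t i \<and> is_load (cmd_at s t i) \<and> Ls s t i = None
     \<and> addr s t i = Some a
     \<and> (\<exists>i'. i' < i \<and> fetched s t i' \<and> is_store (cmd_at s t i') \<and> addr s t i' \<in> {Some a, None})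
     \<and> (let i' = GREATEST i'. i' < i \<and> fetched s t i' \<and> is_store (cmd_at s t i')
                              \<and> addr s t i' \<in> {Some a, None}
        in addr s t i' = Some a \<and> ival s t i' \<noteq> None \<and> i' \<notin> Cs s t \<and> s' = setL s t i (St t i'))"

definition can_commit :: "('q, 'r, 'd::zero) program \<Rightarrow> ('q, 'r, 'd) pstate \<Rightarrow> nat \<Rightarrow> nat \<Rightarrow> bool" where
  "can_commit P s t i \<longleftrightarrow>
     thread_id P t \<and> fetched s t i \<and> i \<notin> Cs s t
     \<and> addr_deps s t i \<union> data_deps s t i \<union> ctrl_deps s t i \<subseteq> Cs s t
     \<and> (is_mem (cmd_at s t i) \<longrightarrow> addr s t i \<noteq> None)
     \<and> ival s t i \<noteq> None
     \<and> (is_mem (cmd_at s t i) \<longrightarrow>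
          (\<forall>j. j < i \<and> fetched s t j \<and> is_mem (cmd_at s t j)
               \<and> (addr s t j = None \<or> addr s t j = addr s t i) \<longrightarrow> j \<in> Cs s t))
     \<and> (is_load (cmd_at s t i) \<longrightarrow> Ls s t i \<noteq> None)
     \<and> (is_assume (cmd_at s t i) \<longrightarrow> ival s t i \<noteq> Some 0)"

text \<open>One transition, labelled with the list of events it produces (the commit of a store
  produces the commit event immediately followed by the propagation event to its own thread).\<close>
inductive pstep :: "('q, 'r, 'd::zero) program \<Rightarrow> ('q, 'r, 'd) pstate \<Rightarrow> ('q, 'r, 'd) event list
     \<Rightarrow> ('q, 'r, 'd) pstate \<Rightarrow> bool" for P where
  fetch: "thread_id P t \<Longrightarrow> ins \<in> ttrans (P ! (t - 1))
     \<Longrightarrow> src_of ins = (if Fs s t = [] then tinit (P ! (t - 1)) else tgt_of (last (Fs s t)))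
     \<Longrightarrow> pstep P s [EFetch t ins] (s\<lparr> Fs := (Fs s)(t := Fs s t @ [ins]) \<rparr>)"
| load_mem: "lfm_step P s t i a s' \<Longrightarrow> pstep P s [ELoad t i a] s'"
| early_read: "early_step P s t i a s' \<Longrightarrow> pstep P s [ELoad t i a] s'"
| commit: "can_commit P s t i \<Longrightarrow> \<not> is_store (cmd_at s t i)
     \<Longrightarrow> pstep P s [ECommit t i] (s\<lparr> Cs := (Cs s)(t := insert i (Cs s t)) \<rparr>)"
| commit_store: "can_commit P s t i \<Longrightarrow> is_store (cmd_at s t i) \<Longrightarrow> addr s t i = Some a
     \<Longrightarrow> k \<noteq> 0 \<Longrightarrow> k \<notin> ran (co s)
     \<Longrightarrow> key s (prp s t a) < k
     \<Longrightarrow> pstep P s [ECommitSt t i k a, EProp t t i a]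
           (s\<lparr> Cs := (Cs s)(t := insert i (Cs s t)), co := (co s)((t, i) := Some k),
               prp := (prp s)(t := (prp s t)(a := St t i)) \<rparr>)"
| propagate: "thread_id P t \<Longrightarrow> co s (t', i') = Some k' \<Longrightarrow> is_store (cmd_at s t' i')
     \<Longrightarrow> addr s t' i' = Some a \<Longrightarrow> key s (prp s t a) < k'
     \<Longrightarrow> pstep P s [EProp t t' i' a] (s\<lparr> prp := (prp s)(t := (prp s t)(a := St t' i')) \<rparr>)"

definition final :: "('q, 'r, 'd::zero) pstate \<Rightarrow> bool" where
  "final s \<longleftrightarrow>
     (\<forall>t i. fetched s t i \<longrightarrow> i \<in> Cs s t)
   \<and> (\<forall>t i' i. i' < i \<and> fetched s t i' \<and> fetched s t i \<and> is_load (cmd_at s t i')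
        \<and> is_load (cmd_at s t i) \<and> addr s t i' = addr s t i
        \<longrightarrow> key s (the (Ls s t i')) \<le> key s (the (Ls s t i)))
   \<and> (\<forall>t i' i. i' < i \<and> fetched s t i' \<and> fetched s t i \<and> is_store (cmd_at s t i')
        \<and> is_load (cmd_at s t i) \<and> addr s t i' = addr s t i
        \<longrightarrow> key s (St t i') \<le> key s (the (Ls s t i)))"

text \<open>A Power run: states ss!0 .. ss!n with event blocks ess!k between ss!k and ss!(k+1),
  from the initial state to a final state.\<close>
definition power_run :: "('q, 'r, 'd::zero) program \<Rightarrow> ('q, 'r, 'd) pstate list
     \<Rightarrow> ('q, 'r, 'd) event list list \<Rightarrow> bool" where
  "power_run P ss ess \<longleftrightarrow>
     length ss = Suc (length ess) \<and> ss ! 0 = init_state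
     \<and> (\<forall>k < length ess. pstep P (ss ! k) (ess ! k) (ss ! Suc k))
     \<and> final (last ss)"

definition C_Power :: "('q, 'r, 'd::zero) program \<Rightarrow> ('q, 'r, 'd) event list set" where
  "C_Power P = {concat ess | ss ess. power_run P ss ess}"

end

theory Submission
  imports Defs "HOL-Library.Sublist"
begin

text \<open>Along a run, prop(t,a) is the store named by the last event (prop,t,*,*,a) so far, and
  the coherence key of prop(t,a) never decreases. Moreover, once an address or a load value is
  defined it stays defined, so the final-state coherence conditions apply to instructions
  observed in the middle of the run.

  If the load (t,i) reads (t',i') from memory at step k, then prop(t,a) = (t',i') at k, which
  gives the decomposition with conditions (1) and (2). A later commit of a store (t,j), j < i, to
  a would receive a key above that of prop(t,a), hence above that of (t',i'); but in the final
  state the key of (t,j) is at most that of the store read by the later load i.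

  Conversely, the load event forms a step of its own, before which prop(t,a) = (t',i') by (1)
  and (2). Were it an early read, it would forward from an uncommitted store (t,j) to a with
  j < i; that store is committed before the run ends, and its commit event violates (3).\<close>

lemma concat_eq_append_ConsD:
  "concat ess = xs @ e # ys \<Longrightarrow>
     \<exists>k < length ess. \<exists>u v. ess ! k = u @ e # v
       \<and> xs = concat (take k ess) @ u \<and> ys = v @ concat (drop (Suc k) ess)"
proof (induction ess arbitrary: xs)
  case (Cons b ess)
  then consider
      us where "b = xs @ us" and "us @ concat ess = e # ys"
    | us where "b @ us = xs" and "concat ess = us @ e # ys"
    by (auto simp: append_eq_append_conv2)
  then show ?case
  proof cases
    case (1 us)
    show ?thesis
    proof (cases us)
      case Nil
      with 1 Cons.IH[of "[]"] obtain k u v where "k < length ess" "ess ! k = u @ e # v"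
          "[] = concat (take k ess) @ u" "ys = v @ concat (drop (Suc k) ess)"
        by auto
      with 1 Nil show ?thesis
        by (intro exI[of _ "Suc k"]) auto
    next
      case (Cons e' us')
      with 1 show ?thesis
        by (intro exI[of _ 0]) auto
    qed
  next
    case (2 us)
    with Cons.IH[of us] obtain k u v where "k < length ess" "ess ! k = u @ e # v"
        "us = concat (take k ess) @ u" "ys = v @ concat (drop (Suc k) ess)"
      by auto
    with 2 show ?thesis
      by (intro exI[of _ "Suc k"]) auto
  qed
qed simp

lemma concat_take_nth_drop:
  "k < length ess \<Longrightarrow> concat ess = concat (take k ess) @ ess ! k @ concat (drop (Suc k) ess)"
  by (metis concat.simps(2) concat_append id_take_nth_drop)

lemma set_concat_drop:
  "e \<in> set (concat (drop n ess)) \<longleftrightarrow> (\<exists>m. n \<le> m \<and> m < length ess \<and> e \<in> set (ess ! m))"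
proof
  assume "e \<in> set (concat (drop n ess))"
  then obtain j where "j < length ess - n" "e \<in> set (ess ! (n + j))"
    by (auto simp: in_set_conv_nth[of _ "drop n ess"])
  then show "\<exists>m. n \<le> m \<and> m < length ess \<and> e \<in> set (ess ! m)"
    by (intro exI[of _ "n + j"]) auto
next
  assume "\<exists>m. n \<le> m \<and> m < length ess \<and> e \<in> set (ess ! m)"
  then obtain m where "n \<le> m" "m < length ess" "e \<in> set (ess ! m)"
    by auto
  then have "ess ! m \<in> set (drop n ess)"
    using nth_mem[of "m - n" "drop n ess"] by simp
  then show "e \<in> set (concat (drop n ess))"
    using \<open>e \<in> set (ess ! m)\<close> by auto
qed

lemma ex_switch_point:
  "\<not> Q k \<Longrightarrow> Q n \<Longrightarrow> k \<le> n \<Longrightarrow> \<exists>m. k \<le> m \<and> m < n \<and> \<not> Q m \<and> Q (Suc m)"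
  by (induction n) (auto, metis le_SucE less_Suc_eq)

lemma map_le_iff_Some: "m \<subseteq>\<^sub>m m' \<longleftrightarrow> (\<forall>x v. m x = Some v \<longrightarrow> m' x = Some v)"
  by (force simp: map_le_def)

lemma eval_mono: "\<rho> \<subseteq>\<^sub>m \<rho>' \<Longrightarrow> eval \<rho> e = Some v \<Longrightarrow> eval \<rho>' e = Some v"
proof (induction \<rho> e arbitrary: v rule: eval.induct)
  case (2 \<rho> r)
  then show ?case by (force simp: map_le_def)
next
  case (3 \<rho> f es)
  then have "\<forall>e\<in>set es. eval \<rho>' e = eval \<rho> e"
    by (auto split: if_splits)
  with "3.prems"(2) show ?case
    by (auto split: if_splits cong: map_cong)
qed simp

lemma reg_step_mono:
  "lv \<subseteq>\<^sub>m lv' \<Longrightarrow> \<rho> \<subseteq>\<^sub>m \<rho>' \<Longrightarrow> reg_step lv \<rho> ji \<subseteq>\<^sub>m reg_step lv' \<rho>' ji"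
  using eval_mono[of \<rho> \<rho>'] by (auto simp: reg_step_def map_le_def split: cmd.split)

lemma regs_at_mono:
  assumes "i \<le> Suc (length F)" and "lv \<subseteq>\<^sub>m lv'"
  shows "regs_at F lv i \<subseteq>\<^sub>m regs_at (F @ G) lv' i"
proof -
  have zip_eq: "zip [1..<i] (F @ G) = zip [1..<i] F"
    using assms(1) by (simp add: zip_append2)
  have foldl_mono: "foldl (reg_step lv) \<rho> xs \<subseteq>\<^sub>m foldl (reg_step lv') \<rho>' xs"
    if "\<rho> \<subseteq>\<^sub>m \<rho>'" for \<rho> \<rho>' xs
    using that by (induction xs arbitrary: \<rho> \<rho>') (simp_all add: assms(2) reg_step_mono)
  show ?thesis
    unfolding regs_at_def zip_eq by (rule foldl_mono) simp
qed

definition extends :: "('q, 'r, 'd) pstate \<Rightarrow> ('q, 'r, 'd) pstate \<Rightarrow> bool" where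
  "extends s s' \<longleftrightarrow> (\<forall>t. prefix (Fs s t) (Fs s' t)) \<and> (\<forall>t. Ls s t \<subseteq>\<^sub>m Ls s' t)"

lemma extends_refl: "extends s s"
  by (simp add: extends_def)

lemma extends_trans: "extends s1 s2 \<Longrightarrow> extends s2 s3 \<Longrightarrow> extends s1 s3"
  unfolding extends_def by (meson map_le_trans prefix_order.trans)

lemma extends_fetched: "extends s s' \<Longrightarrow> fetched s t i \<Longrightarrow> fetched s' t i"
  unfolding extends_def fetched_def by (meson le_trans prefix_length_le)

lemma extends_cmd_at:
  assumes "extends s s'" and "fetched s t i"
  shows "cmd_at s' t i = cmd_at s t i"
proof -
  from assms obtain G where "Fs s' t = Fs s t @ G" and "i - 1 < length (Fs s t)"
    unfolding extends_def prefix_def fetched_def by force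
  then show ?thesis
    by (simp add: cmd_at_def nth_append)
qed

lemma store_val_with_mono:
  assumes s: "extends s s'" and lv: "\<And>t. lv t \<subseteq>\<^sub>m lv' t"
  shows "store_val_with s lv t \<subseteq>\<^sub>m store_val_with s' lv' t"
  unfolding map_le_iff_Some
proof (intro allI impI)
  fix i v assume v: "store_val_with s lv t i = Some v"
  then have f: "fetched s t i"
    by (simp add: store_val_with_def split: if_splits)
  obtain G where G: "Fs s' t = Fs s t @ G"
    using s by (auto simp: extends_def prefix_def)
  have "regs_at (Fs s t) (lv t) i \<subseteq>\<^sub>m regs_at (Fs s' t) (lv' t) i"
    using f unfolding G fetched_def by (intro regs_at_mono lv) simp
  then show "store_val_with s' lv' t i = Some v"
    using v f extends_fetched[OF s f] extends_cmd_at[OF s f]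
    by (auto simp: store_val_with_def split: cmd.splits intro: eval_mono)
qed

lemma lvals_mono: "extends s s' \<Longrightarrow> n \<le> m \<Longrightarrow> lvals s n t \<subseteq>\<^sub>m lvals s' m t"
proof (induction n arbitrary: m t)
  case (Suc n)
  then obtain m' where m: "m = Suc m'" and "n \<le> m'"
    by (cases m) auto
  with Suc have "\<And>t. lvals s n t \<subseteq>\<^sub>m lvals s' m' t"
    by blast
  then have "\<And>t'. store_val_with s (lvals s n) t' \<subseteq>\<^sub>m store_val_with s' (lvals s' m') t'"
    by (rule store_val_with_mono[OF Suc.prems(1)])
  moreover have "Ls s t \<subseteq>\<^sub>m Ls s' t"
    using Suc.prems(1) by (simp add: extends_def)
  ultimately show ?case
    unfolding m map_le_iff_Some by (auto split: option.splits sid.splits)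
qed simp

lemma load_val_eq_Some: "load_val s t j = Some v \<longleftrightarrow> (\<exists>n. lvals s n t j = Some v)"
proof
  assume "\<exists>n. lvals s n t j = Some v"
  then obtain n where n: "lvals s n t j = Some v" ..
  let ?m = "LEAST n. lvals s n t j \<noteq> None"
  have "lvals s ?m t j \<noteq> None" and "?m \<le> n"
    using n by (auto intro: LeastI Least_le)
  then have "lvals s ?m t j = Some v"
    using lvals_mono[OF extends_refl, of ?m n s t] n by (auto simp: map_le_iff_Some)
  then show "load_val s t j = Some v"
    using n by (auto simp: load_val_def)
qed (auto simp: load_val_def split: if_splits)

lemma load_val_mono: "extends s s' \<Longrightarrow> load_val s t \<subseteq>\<^sub>m load_val s' t"
  unfolding map_le_iff_Some load_val_eq_Some by (meson lvals_mono le_refl map_le_iff_Some)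

lemma addr_mono:
  assumes s: "extends s s'" and f: "fetched s t i" and a: "addr s t i = Some a"
  shows "addr s' t i = Some a"
proof -
  obtain G where G: "Fs s' t = Fs s t @ G"
    using s by (auto simp: extends_def prefix_def)
  have "regval s t i \<subseteq>\<^sub>m regval s' t i"
    using f unfolding regval_def G fetched_def by (intro regs_at_mono load_val_mono s) simp
  then show ?thesis
    using a extends_cmd_at[OF s f] by (auto simp: addr_def split: cmd.splits intro: eval_mono)
qed

definition storage_inv :: "('q, 'r, 'd) pstate \<Rightarrow> bool" where
  "storage_inv s \<longleftrightarrow> (\<forall>t i. co s (t, i) \<noteq> None \<longrightarrow> i \<in> Cs s t)
                 \<and> (\<forall>t a t' i'. prp s t a = St t' i' \<longrightarrow> co s (t', i') \<noteq> None)"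

fun prop_upd :: "nat \<Rightarrow> 'd \<Rightarrow> 'd sid \<Rightarrow> ('q, 'r, 'd) event \<Rightarrow> 'd sid" where
  "prop_upd t a p (EProp t0 t' i' a0) = (if t0 = t \<and> a0 = a then St t' i' else p)"
| "prop_upd t a p _ = p"

lemma storage_inv_init: "storage_inv init_state"
  by (simp add: storage_inv_def init_state_def)

lemma pstep_extends: "pstep P s ev s' \<Longrightarrow> extends s s'"
  by (induction rule: pstep.induct)
     (auto simp: extends_def map_le_iff_Some lfm_step_def early_step_def setL_def Let_def)

lemma pstep_storage_inv: "pstep P s ev s' \<Longrightarrow> storage_inv s \<Longrightarrow> storage_inv s'"
  by (induction rule: pstep.induct)
     (auto simp: storage_inv_def lfm_step_def early_step_def setL_def Let_def)

lemma pstep_co_mono: "pstep P s ev s' \<Longrightarrow> storage_inv s \<Longrightarrow> co s \<subseteq>\<^sub>m co s'"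
  by (induction rule: pstep.induct)
     (auto simp: map_le_iff_Some storage_inv_def can_commit_def lfm_step_def early_step_def
        setL_def Let_def)

lemma pstep_prp: "pstep P s ev s' \<Longrightarrow> prp s' t a = foldl (prop_upd t a) (prp s t a) ev"
  by (induction rule: pstep.induct)
     (auto simp: lfm_step_def early_step_def setL_def Let_def)

lemma key_prp_eq:
  assumes "storage_inv s" and "co s \<subseteq>\<^sub>m co s'"
  shows "key s' (prp s t a) = key s (prp s t a)"
proof (cases "prp s t a")
  case (St t' i')
  then obtain c where "co s (t', i') = Some c"
    using assms(1) unfolding storage_inv_def by blast
  then show ?thesis
    using St assms(2) by (simp add: key_def map_le_iff_Some)
qed (simp add: key_def)

lemma pstep_key_prp_mono:
  "pstep P s ev s' \<Longrightarrow> storage_inv s \<Longrightarrow> key s (prp s t a) \<le> key s' (prp s' t a)"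
proof (induction rule: pstep.induct)
  case (commit_store s t0 i a0 k)
  let ?s' = "s\<lparr>Cs := (Cs s)(t0 := insert i (Cs s t0)), co := (co s)((t0, i) \<mapsto> k),
              prp := (prp s)(t0 := (prp s t0)(a0 := St t0 i))\<rparr>"
  show ?case
  proof (cases "t = t0 \<and> a = a0")
    case True
    then show ?thesis
      using commit_store.hyps(6) by (auto simp: key_def)
  next
    case False
    have "i \<notin> Cs s t0"
      using commit_store.hyps(1) by (simp add: can_commit_def)
    then have "co s (t0, i) = None"
      using commit_store.prems unfolding storage_inv_def by blast
    then have "key ?s' (prp s t a) = key s (prp s t a)"
      by (intro key_prp_eq commit_store.prems) (auto simp: map_le_def)
    then show ?thesis
      using False by auto
  qed
next
  case (propagate t0 s t' i' k' a0)
  then show ?case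
    by (auto simp: key_def split: sid.splits)
qed (auto simp: lfm_step_def early_step_def setL_def Let_def key_def split: sid.splits)

lemma pstep_ECommitSt:
  "pstep P s ev s' \<Longrightarrow> ECommitSt t j k a \<in> set ev \<Longrightarrow>
     fetched s t j \<and> is_store (cmd_at s t j) \<and> addr s t j = Some a
     \<and> key s (prp s t a) < k \<and> co s' (t, j) = Some k"
  by (induction rule: pstep.induct) (auto simp: can_commit_def)

lemma pstep_ELoad:
  "pstep P s ev s' \<Longrightarrow> ELoad t i a \<in> set ev \<Longrightarrow>
     ev = [ELoad t i a] \<and> (lfm_step P s t i a s' \<or> early_step P s t i a s')"
  by (induction rule: pstep.induct) auto

lemma pstep_satisfies_load:
  "pstep P s ev s' \<Longrightarrow> Ls s t i = None \<Longrightarrow> Ls s' t i \<noteq> None \<Longrightarrow>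
     \<exists>a. addr s t i = Some a \<and> ev = [ELoad t i a]"
  by (induction rule: pstep.induct)
     (auto simp: lfm_step_def early_step_def setL_def Let_def split: if_splits)

lemma pstep_commit_store:
  "pstep P s ev s' \<Longrightarrow> i \<notin> Cs s t \<Longrightarrow> i \<in> Cs s' t \<Longrightarrow> is_store (cmd_at s t i)
     \<Longrightarrow> addr s t i = Some a \<Longrightarrow> \<exists>k. ECommitSt t i k a \<in> set ev"
  by (induction rule: pstep.induct)
     (auto simp: lfm_step_def early_step_def setL_def Let_def split: if_splits)

lemma prop_upd_other: "\<not> (\<exists>x y. e = EProp t x y a) \<Longrightarrow> prop_upd t a p e = p"
  by (cases e) auto

lemma foldl_prop_upd_no_prop:
  "\<forall>e\<in>set \<sigma>. \<not> (\<exists>x y. e = EProp t x y a) \<Longrightarrow> foldl (prop_upd t a) p \<sigma> = p"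
  by (induction \<sigma> arbitrary: p) (simp_all add: prop_upd_other)

lemma foldl_prop_upd_eq_St:
  "foldl (prop_upd t a) p \<sigma> = St x y \<Longrightarrow>
     p = St x y \<or> (\<exists>\<sigma>1 \<sigma>2. \<sigma> = \<sigma>1 @ [EProp t x y a] @ \<sigma>2 \<and> (\<forall>e\<in>set \<sigma>2. \<not> (\<exists>x y. e = EProp t x y a)))"
proof (induction \<sigma> rule: rev_induct)
  case (snoc e \<sigma>)
  show ?case
  proof (cases "\<exists>x y. e = EProp t x y a")
    case True
    then obtain x' y' where "e = EProp t x' y' a"
      by blast
    with snoc.prems show ?thesis
      by (intro disjI2 exI[of _ \<sigma>] exI[of _ "[]"]) auto
  next
    case False
    then have "foldl (prop_upd t a) p \<sigma> = St x y"
      using snoc.prems by (simp add: prop_upd_other)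
    from snoc.IH[OF this] show ?thesis
    proof
      assume "\<exists>\<sigma>1 \<sigma>2. \<sigma> = \<sigma>1 @ [EProp t x y a] @ \<sigma>2 \<and> (\<forall>e\<in>set \<sigma>2. \<not> (\<exists>x y. e = EProp t x y a))"
      then obtain \<sigma>1 \<sigma>2 where "\<sigma> = \<sigma>1 @ [EProp t x y a] @ \<sigma>2"
        and "\<forall>e\<in>set \<sigma>2. \<not> (\<exists>x y. e = EProp t x y a)"
        by blast
      with False show ?thesis
        by (intro disjI2 exI[of _ \<sigma>1] exI[of _ "\<sigma>2 @ [e]"]) auto
    qed simp
  qed
qed simp

lemma early_step_uncommitted_store:
  assumes "early_step P s t i a s'"
  obtains g where "g < i" "fetched s t g" "is_store (cmd_at s t g)" "addr s t g = Some a"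
    "g \<notin> Cs s t"
proof -
  define Q where "Q g \<longleftrightarrow> g < i \<and> fetched s t g \<and> is_store (cmd_at s t g) \<and> addr s t g \<in> {Some a, None}"
    for g
  define g where "g = (GREATEST g. Q g)"
  have "\<exists>g. Q g"
    using assms unfolding early_step_def Q_def by blast
  then have "Q g"
    unfolding g_def by (rule GreatestI_ex_nat[where b = i]) (simp add: Q_def)
  moreover have "addr s t g = Some a" "g \<notin> Cs s t"
    using assms unfolding early_step_def Let_def g_def Q_def by auto
  ultimately show ?thesis
    using that Q_def by blast
qed

definition reads_after_prop :: "('q, 'r, 'd) event list \<Rightarrow> nat \<Rightarrow> nat \<Rightarrow> nat \<Rightarrow> nat \<Rightarrow> bool" where
  "reads_after_prop \<sigma> t i t' i' \<longleftrightarrow> (\<exists>\<sigma>1 \<sigma>2 \<sigma>3 a.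
       \<sigma> = \<sigma>1 @ [EProp t t' i' a] @ \<sigma>2 @ [ELoad t i a] @ \<sigma>3
     \<and> (\<forall>e\<in>set \<sigma>2. \<not> (\<exists>x y. e = EProp t x y a))
     \<and> (\<forall>e\<in>set \<sigma>3. \<not> (\<exists>j k. e = ECommitSt t j k a \<and> j \<in> {1..i - 1})))"

context
  fixes P :: "('q, 'r, 'd::zero) program"
    and ss :: "('q, 'r, 'd) pstate list"
    and ess :: "('q, 'r, 'd) event list list"
  assumes run: "power_run P ss ess"
begin

lemma run_step: "k < length ess \<Longrightarrow> pstep P (ss ! k) (ess ! k) (ss ! Suc k)"
  using run by (simp add: power_run_def)

lemma run_final: "final (ss ! length ess)"
  using run unfolding power_run_def by (metis diff_Suc_1 last_conv_nth length_0_conv nat.distinct(1))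

lemma run_storage_inv: "n \<le> length ess \<Longrightarrow> storage_inv (ss ! n)"
proof (induction n)
  case 0
  then show ?case
    using run storage_inv_init by (simp add: power_run_def)
next
  case (Suc n)
  then show ?case
    using pstep_storage_inv[OF run_step] by simp
qed

lemma run_mono:
  assumes "\<And>k. k < length ess \<Longrightarrow> R (ss ! k) (ss ! Suc k)"
    and "\<And>s. R s s" and "\<And>s1 s2 s3. R s1 s2 \<Longrightarrow> R s2 s3 \<Longrightarrow> R s1 s3"
  shows "m \<le> n \<Longrightarrow> n \<le> length ess \<Longrightarrow> R (ss ! m) (ss ! n)"
proof (induction n rule: dec_induct)
  case (step n)
  then show ?case
    using assms by (meson Suc_le_lessD less_or_eq_imp_le)
qed (use assms(2) in simp)

lemma run_extends: "m \<le> n \<Longrightarrow> n \<le> length ess \<Longrightarrow> extends (ss ! m) (ss ! n)"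
  by (rule run_mono) (auto intro: pstep_extends run_step extends_refl extends_trans)

lemma run_co_mono: "m \<le> n \<Longrightarrow> n \<le> length ess \<Longrightarrow> co (ss ! m) \<subseteq>\<^sub>m co (ss ! n)"
proof (rule run_mono)
  show "co (ss ! k) \<subseteq>\<^sub>m co (ss ! Suc k)" if "k < length ess" for k
    using pstep_co_mono[OF run_step[OF that] run_storage_inv] that by simp
qed (auto intro: map_le_trans)

lemma run_key_prp_mono:
  "m \<le> n \<Longrightarrow> n \<le> length ess \<Longrightarrow> key (ss ! m) (prp (ss ! m) t a) \<le> key (ss ! n) (prp (ss ! n) t a)"
proof (rule run_mono)
  show "key (ss ! k) (prp (ss ! k) t a) \<le> key (ss ! Suc k) (prp (ss ! Suc k) t a)"
    if "k < length ess" for k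
    using pstep_key_prp_mono[OF run_step[OF that] run_storage_inv] that by simp
qed auto

lemma run_mem_instr_persists:
  assumes "m \<le> n" "n \<le> length ess" "fetched (ss ! m) t j" "addr (ss ! m) t j = Some a"
  shows "fetched (ss ! n) t j" "cmd_at (ss ! n) t j = cmd_at (ss ! m) t j"
    "addr (ss ! n) t j = Some a"
proof -
  have ext: "extends (ss ! m) (ss ! n)"
    using run_extends assms(1,2) .
  show "fetched (ss ! n) t j" "cmd_at (ss ! n) t j = cmd_at (ss ! m) t j"
    "addr (ss ! n) t j = Some a"
    using extends_fetched[OF ext] extends_cmd_at[OF ext] addr_mono[OF ext] assms(3,4) by auto
qed

lemma run_store_committed_later:
  assumes k: "k < length ess" and f: "fetched (ss ! k) t g"
    and st: "is_store (cmd_at (ss ! k) t g)" and a: "addr (ss ! k) t g = Some a"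
    and nc: "g \<notin> Cs (ss ! k) t"
  shows "\<exists>m. k \<le> m \<and> m < length ess \<and> (\<exists>c. ECommitSt t g c a \<in> set (ess ! m))"
proof -
  have "fetched (ss ! length ess) t g"
    using extends_fetched[OF run_extends f] k by simp
  then have "g \<in> Cs (ss ! length ess) t"
    using run_final by (simp add: final_def)
  then obtain m where m: "k \<le> m" "m < length ess" "g \<notin> Cs (ss ! m) t" "g \<in> Cs (ss ! Suc m) t"
    using ex_switch_point[where Q = "\<lambda>n. g \<in> Cs (ss ! n) t", OF nc] k by (meson less_imp_le)
  have "is_store (cmd_at (ss ! m) t g)" and "addr (ss ! m) t g = Some a"
    using run_mem_instr_persists[of k m t g a] m f st a by simp_all
  then obtain c where "ECommitSt t g c a \<in> set (ess ! m)"
    using pstep_commit_store[OF run_step[OF m(2)] m(3,4)] by blast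
  with m show ?thesis
    by blast
qed

lemma run_prp: "n \<le> length ess \<Longrightarrow> prp (ss ! n) t a = foldl (prop_upd t a) (Init a) (concat (take n ess))"
proof (induction n)
  case 0
  then show ?case
    using run by (simp add: power_run_def init_state_def)
next
  case (Suc n)
  then show ?case
    using pstep_prp[OF run_step, of n t a] by (simp add: take_Suc_conv_app_nth)
qed

lemma run_no_commit_below_after_lfm_read:
  assumes k: "k < length ess" and lfm: "lfm_step P (ss ! k) t i a (ss ! Suc k)"
    and read: "Ls (ss ! Suc k) t i = Some (St t' i')"
    and m: "k < m" "m < length ess" and commit: "ECommitSt t j c a \<in> set (ess ! m)"
    and j: "j < i"
  shows False
proof -
  let ?sf = "ss ! length ess"
  have prp_k: "prp (ss ! k) t a = St t' i'"
    using lfm read by (simp add: lfm_step_def setL_def)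
  obtain c' where c': "co (ss ! k) (t', i') = Some c'"
    using run_storage_inv[of k] prp_k k unfolding storage_inv_def by fastforce
  have j_store: "fetched (ss ! m) t j" "is_store (cmd_at (ss ! m) t j)" "addr (ss ! m) t j = Some a"
    and c_fresh: "key (ss ! m) (prp (ss ! m) t a) < c" and co_j: "co (ss ! Suc m) (t, j) = Some c"
    using pstep_ECommitSt[OF run_step[OF m(2)] commit] by auto
  have "c' \<le> key (ss ! m) (prp (ss ! m) t a)"
    using run_key_prp_mono[of k m t a] m prp_k c' by (simp add: key_def)
  with c_fresh have "c' < c"
    by simp
  have "co ?sf (t, j) = Some c" and "co ?sf (t', i') = Some c'"
    using run_co_mono[of "Suc m" "length ess"] run_co_mono[of k "length ess"] m k co_j c'
    by (auto simp: map_le_iff_Some)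
  moreover have "Ls ?sf t i = Some (St t' i')"
    using run_extends[of "Suc k" "length ess"] k read by (auto simp: extends_def map_le_iff_Some)
  moreover have "fetched ?sf t j" "is_store (cmd_at ?sf t j)" "addr ?sf t j = Some a"
    using run_mem_instr_persists[of m "length ess" t j a] m j_store by simp_all
  moreover have "fetched ?sf t i" "is_load (cmd_at ?sf t i)" "addr ?sf t i = Some a"
    using run_mem_instr_persists[of k "length ess" t i a] k lfm by (simp_all add: lfm_step_def)
  ultimately have "c \<le> c'"
    using run_final j unfolding final_def key_def by fastforce
  with \<open>c' < c\<close> show False
    by simp
qed

lemma run_lfm_read_imp_reads_after_prop:
  assumes k: "k < length ess" and lfm: "lfm_step P (ss ! k) t i a (ss ! Suc k)"
    and read: "Ls (ss ! Suc k) t i = Some (St t' i')"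
  shows "reads_after_prop (concat ess) t i t' i'"
proof -
  have unread: "Ls (ss ! k) t i = None" and addr: "addr (ss ! k) t i = Some a"
    using lfm by (auto simp: lfm_step_def)
  obtain a' where "addr (ss ! k) t i = Some a'" and "ess ! k = [ELoad t i a']"
    using pstep_satisfies_load[OF run_step[OF k] unread] read by auto
  with addr have block: "ess ! k = [ELoad t i a]"
    by simp
  have "foldl (prop_upd t a) (Init a) (concat (take k ess)) = St t' i'"
    using run_prp[of k t a] k lfm read by (simp add: lfm_step_def setL_def)
  from foldl_prop_upd_eq_St[OF this] obtain \<sigma>1 \<sigma>2 where prefix: "concat (take k ess) = \<sigma>1 @ [EProp t t' i' a] @ \<sigma>2"
    and no_prop: "\<forall>e\<in>set \<sigma>2. \<not> (\<exists>x y. e = EProp t x y a)"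
    by auto
  have no_commit: "\<forall>e\<in>set (concat (drop (Suc k) ess)). \<not> (\<exists>j c. e = ECommitSt t j c a \<and> j \<in> {1..i - 1})"
  proof (intro ballI notI, elim exE conjE)
    fix e j c
    assume "e \<in> set (concat (drop (Suc k) ess))" and e: "e = ECommitSt t j c a"
      and "j \<in> {1..i - 1}"
    then obtain m where "Suc k \<le> m" "m < length ess" "e \<in> set (ess ! m)"
      unfolding set_concat_drop by blast
    moreover have "j < i"
      using \<open>j \<in> {1..i - 1}\<close> by auto
    ultimately show False
      using run_no_commit_below_after_lfm_read[OF k lfm read, of m j c] e by simp
  qed
  show ?thesis
    unfolding reads_after_prop_def
    using concat_take_nth_drop[OF k] prefix block no_prop no_commit by fastforce
qed

lemma run_early_read_commit_below:
  assumes k: "k < length ess" and block: "ess ! k = [ELoad t i a]"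
    and early: "early_step P (ss ! k) t i a (ss ! Suc k)"
  obtains g m c where "g \<in> {1..i - 1}" "Suc k \<le> m" "m < length ess"
    "ECommitSt t g c a \<in> set (ess ! m)"
proof -
  obtain g where g: "g < i" "fetched (ss ! k) t g" "is_store (cmd_at (ss ! k) t g)"
    "addr (ss ! k) t g = Some a" "g \<notin> Cs (ss ! k) t"
    using early by (rule early_step_uncommitted_store)
  then obtain m c where m: "k \<le> m" "m < length ess" "ECommitSt t g c a \<in> set (ess ! m)"
    using run_store_committed_later[OF k] by blast
  with block have "Suc k \<le> m"
    by (cases "m = k") auto
  moreover have "g \<in> {1..i - 1}"
    using g by (auto simp: fetched_def)
  ultimately show ?thesis
    using that m by blast
qed

lemma run_reads_after_prop_imp_lfm_read:
  assumes "reads_after_prop (concat ess) t i t' i'"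
  shows "\<exists>k < length ess. \<exists>a. lfm_step P (ss ! k) t i a (ss ! Suc k)
                               \<and> Ls (ss ! Suc k) t i = Some (St t' i')"
proof -
  obtain \<sigma>1 \<sigma>2 \<sigma>3 a where dec: "concat ess = \<sigma>1 @ [EProp t t' i' a] @ \<sigma>2 @ [ELoad t i a] @ \<sigma>3"
    and no_prop: "\<forall>e\<in>set \<sigma>2. \<not> (\<exists>x y. e = EProp t x y a)"
    and no_commit: "\<forall>e\<in>set \<sigma>3. \<not> (\<exists>j c. e = ECommitSt t j c a \<and> j \<in> {1..i - 1})"
    using assms unfolding reads_after_prop_def by blast
  have "concat ess = (\<sigma>1 @ [EProp t t' i' a] @ \<sigma>2) @ ELoad t i a # \<sigma>3"
    using dec by simp
  from concat_eq_append_ConsD[OF this] obtain k u v where k: "k < length ess"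
    and blk: "ess ! k = u @ ELoad t i a # v"
    and pre: "\<sigma>1 @ [EProp t t' i' a] @ \<sigma>2 = concat (take k ess) @ u"
    and post: "\<sigma>3 = v @ concat (drop (Suc k) ess)"
    by blast
  have block: "ess ! k = [ELoad t i a]"
    and step: "lfm_step P (ss ! k) t i a (ss ! Suc k) \<or> early_step P (ss ! k) t i a (ss ! Suc k)"
    using pstep_ELoad[OF run_step[OF k]] blk by auto
  with blk have "u = []"
    by (cases u) auto
  have prp_k: "prp (ss ! k) t a = St t' i'"
  proof -
    have "prp (ss ! k) t a = foldl (prop_upd t a) (Init a) (\<sigma>1 @ [EProp t t' i' a] @ \<sigma>2)"
      using run_prp[of k t a] k pre \<open>u = []\<close> by simp
    also have "\<dots> = St t' i'"
      using foldl_prop_upd_no_prop[OF no_prop] by simp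
    finally show ?thesis .
  qed
  show ?thesis
  proof (cases "lfm_step P (ss ! k) t i a (ss ! Suc k)")
    case True
    then have "Ls (ss ! Suc k) t i = Some (St t' i')"
      using prp_k by (simp add: lfm_step_def setL_def)
    with True k show ?thesis
      by blast
  next
    case False
    with step obtain g m c where g: "g \<in> {1..i - 1}" and m: "Suc k \<le> m" "m < length ess"
      "ECommitSt t g c a \<in> set (ess ! m)"
      using run_early_read_commit_below[OF k block] by blast
    then have "ECommitSt t g c a \<in> set (concat (drop (Suc k) ess))"
      unfolding set_concat_drop by blast
    with post have "ECommitSt t g c a \<in> set \<sigma>3"
      by simp
    with g no_commit show ?thesis
      by blast
  qed
qed

end

theorem lemma5:
  fixes P :: "('q, 'r::finite, 'd::{zero, finite}) program"
    and ss :: "('q, 'r, 'd) pstate list"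
    and ess :: "('q, 'r, 'd) event list list"
    and \<sigma> :: "('q, 'r, 'd) event list"
  assumes "wf_prog P"
    and "power_run P ss ess"
    and "\<sigma> = concat ess"
  shows "(\<exists>k < length ess. \<exists>a. lfm_step P (ss ! k) t i a (ss ! Suc k)
                               \<and> Ls (ss ! Suc k) t i = Some (St t' i'))
     \<longleftrightarrow> (\<exists>\<sigma>1 \<sigma>2 \<sigma>3 a.
           \<sigma> = \<sigma>1 @ [EProp t t' i' a] @ \<sigma>2 @ [ELoad t i a] @ \<sigma>3
         \<and> (\<forall>e\<in>set \<sigma>2. \<not> (\<exists>x y. e = EProp t x y a))
         \<and> (\<forall>e\<in>set \<sigma>3. \<not> (\<exists>j k. e = ECommitSt t j k a \<and> j \<in> {1..i - 1})))"
proof -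
  have "(\<exists>k < length ess. \<exists>a. lfm_step P (ss ! k) t i a (ss ! Suc k)
                               \<and> Ls (ss ! Suc k) t i = Some (St t' i'))
     \<longleftrightarrow> reads_after_prop \<sigma> t i t' i'"
    using run_lfm_read_imp_reads_after_prop[OF assms(2)]
      run_reads_after_prop_imp_lfm_read[OF assms(2)] assms(3) by blast
  then show ?thesis
    by (simp only: reads_after_prop_def)
qed

end
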